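(* Let $(P,\preceq)$ be a poset and $\mathcal{X}:=\{X\subseteq P\mid (X,\preceq)\text{ is well-ordered}\}$. Let $f:\mathcal{X}\to\mathcal{X}$ satisfy: for all $X,X'\in\mathcal{X}$ and all $y\in f(X)\mathbin{\triangle}f(X')$ there exists $x\in X\mathbin{\triangle}X'$ with $x\prec y$. Then $f$ has a unique fixed point. Moreover, this fixed point equals $X_{\hat\alpha}$ for some ordinal $\hat\alpha$, where $X_0=\emptyset$; for every ordinal $\alpha$, $X_{\alpha+1}=X_\alpha$ if $f(X_\alpha)\setminus X_\alpha=\emptyset$ and $X_{\alpha+1}=X_\alpha\cup\{\min(f(X_\alpha)\setminus X_\alpha)\}$ otherwise; and for nonzero limit ordinals $\alpha$, $X_\alpha=\bigcup_{\beta<\alpha}X_\beta$.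
   Context: $X\mathbin{\triangle}Y=(X\setminus Y)\cup(Y\setminus X)$ is the symmetric difference. $x\prec y$ means $x\preceq y$ and $x\neq y$. A poset is well-ordered if every nonempty subset has a least element. *)

theory Defs
  imports Main
begin

definition partial_order_on_set :: "'a set \<Rightarrow> ('a \<Rightarrow> 'a \<Rightarrow> bool) \<Rightarrow> bool" where
  "partial_order_on_set P le \<longleftrightarrow>
     (\<forall>x\<in>P. le x x) \<and>
     (\<forall>x\<in>P. \<forall>y\<in>P. le x y \<and> le y x \<longrightarrow> x = y) \<and>
     (\<forall>x\<in>P. \<forall>y\<in>P. \<forall>z\<in>P. le x y \<and> le y z \<longrightarrow> le x z)"

definition strict :: "('a \<Rightarrow> 'a \<Rightarrow> bool) \<Rightarrow> 'a \<Rightarrow> 'a \<Rightarrow> bool" where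
  "strict le x y \<longleftrightarrow> le x y \<and> x \<noteq> y"

definition is_least :: "('a \<Rightarrow> 'a \<Rightarrow> bool) \<Rightarrow> 'a set \<Rightarrow> 'a \<Rightarrow> bool" where
  "is_least le S m \<longleftrightarrow> m \<in> S \<and> (\<forall>z\<in>S. le m z)"

definition least :: "('a \<Rightarrow> 'a \<Rightarrow> bool) \<Rightarrow> 'a set \<Rightarrow> 'a" where
  "least le S = (THE m. is_least le S m)"

definition well_ordered_subset :: "'a set \<Rightarrow> ('a \<Rightarrow> 'a \<Rightarrow> bool) \<Rightarrow> 'a set \<Rightarrow> bool" where
  "well_ordered_subset P le X \<longleftrightarrow>
     X \<subseteq> P \<and> (\<forall>S. S \<subseteq> X \<and> S \<noteq> {} \<longrightarrow> (\<exists>m. is_least le S m))"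

definition WO_sets :: "'a set \<Rightarrow> ('a \<Rightarrow> 'a \<Rightarrow> bool) \<Rightarrow> 'a set set" where
  "WO_sets P le = {X. well_ordered_subset P le X}"

definition symdiff :: "'a set \<Rightarrow> 'a set \<Rightarrow> 'a set" where
  "symdiff X Y = (X - Y) \<union> (Y - X)"

text \<open>The transfinite iteration X_\<alpha>, indexed along a well-order r (standing for the
  ordinals below its order type): X at the r-least index is empty; at the successor of
  \<beta> (an index \<alpha> whose strict predecessors are exactly the indices \<le> \<beta>) it follows the
  successor rule; at nonzero limit indices it is the union of all earlier stages.\<close>
definition is_iteration ::
  "('a \<Rightarrow> 'a \<Rightarrow> bool) \<Rightarrow> ('a set \<Rightarrow> 'a set) \<Rightarrow> 'i rel \<Rightarrow> ('i \<Rightarrow> 'a set) \<Rightarrow> bool" where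
  "is_iteration le f r X \<longleftrightarrow>
     Well_order r \<and>
     (\<forall>\<alpha>\<in>Field r. underS r \<alpha> = {} \<longrightarrow> X \<alpha> = {}) \<and>
     (\<forall>\<alpha>\<in>Field r. \<forall>\<beta>\<in>Field r. underS r \<alpha> = under r \<beta> \<longrightarrow>
        X \<alpha> = (if f (X \<beta>) - X \<beta> = {} then X \<beta>
                 else X \<beta> \<union> {least le (f (X \<beta>) - X \<beta>)})) \<and>
     (\<forall>\<alpha>\<in>Field r. underS r \<alpha> \<noteq> {} \<and> (\<forall>\<beta>\<in>Field r. underS r \<alpha> \<noteq> under r \<beta>) \<longrightarrow>
        X \<alpha> = (\<Union>\<beta>\<in>underS r \<alpha>. X \<beta>))"

end

theory Submission imports Defs begin

text \<open>Uniqueness: the symmetric difference of two fixed points lies in the union of two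
  well-ordered sets, which is well-founded, and a minimal element of it would contradict the
  contraction condition.

  Existence: call a well-ordered \<open>X\<close> an approximant if it is an initial segment of \<open>f X\<close>.
  Comparing least elements of differences, the contraction condition forces any two
  approximants to be comparable, the smaller one an initial segment of the larger.
  Approximants are closed under unions and under adding the least element of \<open>f X - X\<close>,
  so their union is the largest approximant and a fixed point. Ordered by inclusion, the
  approximants are exactly the stages \<open>X\<^sub>\<alpha>\<close> of the transfinite iteration.\<close>

locale poset_on_set =
  fixes P :: "'a set" and le :: "'a \<Rightarrow> 'a \<Rightarrow> bool"
  assumes poset: "partial_order_on_set P le"
begin

abbreviation WO :: "'a set set" where "WO \<equiv> WO_sets P le"

lemma poset_refl: "x \<in> P \<Longrightarrow> le x x"
  using poset unfolding partial_order_on_set_def by blast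

lemma poset_antisym: "x \<in> P \<Longrightarrow> y \<in> P \<Longrightarrow> le x y \<Longrightarrow> le y x \<Longrightarrow> x = y"
  using poset unfolding partial_order_on_set_def by blast

lemma poset_trans: "x \<in> P \<Longrightarrow> y \<in> P \<Longrightarrow> z \<in> P \<Longrightarrow> le x y \<Longrightarrow> le y z \<Longrightarrow> le x z"
  using poset unfolding partial_order_on_set_def by blast

lemma WO_subset_carrier: "X \<in> WO \<Longrightarrow> X \<subseteq> P"
  unfolding WO_sets_def well_ordered_subset_def by blast

lemma WO_subset: "X \<in> WO \<Longrightarrow> Z \<subseteq> X \<Longrightarrow> Z \<in> WO"
  unfolding WO_sets_def well_ordered_subset_def by blast

lemma empty_WO: "{} \<in> WO"
  unfolding WO_sets_def well_ordered_subset_def by auto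

lemma least_WO:
  assumes "X \<in> WO" "S \<subseteq> X" "S \<noteq> {}"
  shows least_WO_mem: "least le S \<in> S" and least_WO_le: "z \<in> S \<Longrightarrow> le (least le S) z"
proof -
  obtain m where m: "is_least le S m"
    using assms unfolding WO_sets_def well_ordered_subset_def by blast
  have P: "S \<subseteq> P" using assms WO_subset_carrier by blast
  have "is_least le S (least le S)"
    unfolding least_def
  proof (rule theI[of _ m])
    show "m' = m" if "is_least le S m'" for m'
      using that m P poset_antisym[of m' m] unfolding is_least_def by blast
  qed (fact m)
  then show "least le S \<in> S" "z \<in> S \<Longrightarrow> le (least le S) z" unfolding is_least_def by auto
qed

lemma not_strict_least_WO:
  "X \<in> WO \<Longrightarrow> S \<subseteq> X \<Longrightarrow> x \<in> S \<Longrightarrow> \<not> strict le x (least le S)"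
  using least_WO[of X S] WO_subset_carrier[of X] poset_antisym unfolding strict_def by blast

lemma WO_total:
  assumes "X \<in> WO" "x \<in> X" "y \<in> X"
  shows "le x y \<or> le y x"
  using least_WO[OF assms(1), of "{x, y}"] assms(2,3) by auto

text \<open>A union of two well-ordered sets need not be totally ordered, but it is still
  well-founded: of the least elements of the two parts, one is minimal in the union.\<close>
lemma Un_WO_minimal:
  assumes A: "A \<in> WO" and B: "B \<in> WO" and S: "S \<subseteq> A \<union> B" "S \<noteq> {}"
  shows "\<exists>m\<in>S. \<forall>x\<in>S. \<not> strict le x m"
proof -
  have P: "S \<subseteq> P" using S A B WO_subset_carrier by blast
  have minimal_other:
    "\<exists>m\<in>S. \<forall>x\<in>S. \<not> strict le x m"
    if C: "C \<in> WO" and D: "D \<in> WO" and SCD: "S \<subseteq> C \<union> D" and ne: "S \<inter> C \<noteq> {}" for C D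
  proof (cases "\<forall>x\<in>S. \<not> strict le x (least le (S \<inter> C))")
    case True
    then show ?thesis using least_WO_mem[OF C _ ne] by blast
  next
    case False
    let ?c = "least le (S \<inter> C)" and ?d = "least le (S \<inter> D)"
    obtain x where x: "x \<in> S" "strict le x ?c" using False by blast
    have "x \<in> S \<inter> D" using x SCD not_strict_least_WO[OF C, of "S \<inter> C" x] by blast
    then have d: "?d \<in> S \<inter> D" "le ?d x" using least_WO[OF D, of "S \<inter> D"] by blast+
    have "\<not> strict le y ?d" if y: "y \<in> S" for y
    proof
      assume yd: "strict le y ?d"
      then have "y \<in> S \<inter> C" using y SCD not_strict_least_WO[OF D, of "S \<inter> D" y] by blast
      then have "le ?c y" using least_WO_le[OF C] by blast
      moreover have "?c \<in> S" using least_WO_mem[OF C _ ne] by blast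
      ultimately have "le ?c x"
        using poset_trans[of ?c y ?d] poset_trans[of ?c ?d x] yd d x y P
        unfolding strict_def by blast
      then show False using x P poset_antisym[of x ?c] \<open>?c \<in> S\<close> unfolding strict_def by blast
    qed
    then show ?thesis using d by blast
  qed
  show ?thesis
  proof (cases "S \<inter> A = {}")
    case True
    then have "S \<inter> B \<noteq> {}" using S by blast
    then show ?thesis using minimal_other[OF B A] S by blast
  next
    case False
    then show ?thesis using minimal_other[OF A B] S by blast
  qed
qed

end

definition initial_segment :: "('a \<Rightarrow> 'a \<Rightarrow> bool) \<Rightarrow> 'a set \<Rightarrow> 'a set \<Rightarrow> bool" where
  "initial_segment le X Y \<longleftrightarrow> X \<subseteq> Y \<and> (\<forall>y\<in>Y. \<forall>x\<in>X. le y x \<longrightarrow> y \<in> X)"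

locale wo_contraction = poset_on_set P le
  for P :: "'a set" and le :: "'a \<Rightarrow> 'a \<Rightarrow> bool" +
  fixes f :: "'a set \<Rightarrow> 'a set"
  assumes f_maps: "\<forall>X\<in>WO_sets P le. f X \<in> WO_sets P le"
    and f_cond: "\<forall>X\<in>WO_sets P le. \<forall>X'\<in>WO_sets P le. \<forall>y\<in>symdiff (f X) (f X').
                   \<exists>x\<in>symdiff X X'. strict le x y"
begin

lemma f_WO: "X \<in> WO \<Longrightarrow> f X \<in> WO"
  using f_maps by blast

lemma contraction:
  assumes "X \<in> WO" "X' \<in> WO" "y \<in> f X" "y \<notin> f X'"
  shows "\<exists>x \<in> (X - X') \<union> (X' - X). strict le x y"
  using f_cond assms unfolding symdiff_def by blast

lemma fixed_point_unique:
  assumes Y: "Y \<in> WO" "f Y = Y" and Z: "Z \<in> WO" "f Z = Z"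
  shows "Y = Z"
proof (rule ccontr)
  let ?S = "(Y - Z) \<union> (Z - Y)"
  assume "Y \<noteq> Z"
  then have "?S \<subseteq> Y \<union> Z" "?S \<noteq> {}" by blast+
  then obtain m where "m \<in> ?S" "\<forall>x\<in>?S. \<not> strict le x m"
    using Un_WO_minimal[OF Y(1) Z(1)] by blast
  then show False using contraction[OF Y(1) Z(1)] contraction[OF Z(1) Y(1)] Y Z by blast
qed

lemma image_mem_iff_below_diff:
  assumes X: "X \<in> WO" and X': "X' \<in> WO" and "y \<in> P"
    and below: "\<forall>d \<in> (X - X') \<union> (X' - X). le y d"
  shows "y \<in> f X \<longleftrightarrow> y \<in> f X'"
proof -
  have "d \<in> P" if "d \<in> (X - X') \<union> (X' - X)" for d
    using that X X' WO_subset_carrier by blast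
  then show ?thesis
    using contraction[OF X X', of y] contraction[OF X' X, of y] below \<open>y \<in> P\<close> poset_antisym
    unfolding strict_def by (metis Un_commute)
qed

definition approximant :: "'a set \<Rightarrow> bool" where
  "approximant X \<longleftrightarrow> X \<in> WO \<and> initial_segment le X (f X)"

lemma approximant_WO: "approximant X \<Longrightarrow> X \<in> WO"
  unfolding approximant_def by blast

lemma approximant_subset_image: "approximant X \<Longrightarrow> X \<subseteq> f X"
  unfolding approximant_def initial_segment_def by blast

lemma approximant_down_closed:
  "approximant X \<Longrightarrow> y \<in> f X \<Longrightarrow> x \<in> X \<Longrightarrow> le y x \<Longrightarrow> y \<in> X"
  unfolding approximant_def initial_segment_def by blast

lemma approximant_empty: "approximant {}"
  unfolding approximant_def initial_segment_def using empty_WO by blast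

lemma approximant_below_image:
  assumes X: "approximant X" and a: "a \<in> f X - X" and x: "x \<in> X"
  shows "strict le x a"
proof -
  have fX: "f X \<in> WO" using f_WO approximant_WO X by blast
  have "x \<in> f X" using approximant_subset_image X x by blast
  then have "le x a \<or> le a x" using WO_total[OF fX] a by blast
  then show ?thesis using approximant_down_closed[OF X _ x] a x unfolding strict_def by blast
qed

text \<open>The least new element of a larger approximant already lies in the image of the
  smaller one, since otherwise the contraction would produce an even smaller new element.\<close>
lemma approximant_below_extension:
  assumes X: "approximant X" and X': "approximant X'" and XX': "X \<subseteq> X'"
    and a: "a \<in> X' - X" and x: "x \<in> X"
  shows "strict le x a"
proof -
  have W: "X \<in> WO" "X' \<in> WO" using X X' approximant_WO by blast+
  let ?a = "least le (X' - X)"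
  have a0: "?a \<in> X' - X" "le ?a a"
    using least_WO_mem[OF W(2), of "X' - X"] least_WO_le[OF W(2), of "X' - X" a] a by auto
  have "?a \<in> P" using a0(1) WO_subset_carrier[OF W(2)] by blast
  moreover have "\<forall>d \<in> (X - X') \<union> (X' - X). le ?a d"
    using least_WO_le[OF W(2), of "X' - X"] XX' a by blast
  ultimately have "?a \<in> f X"
    using image_mem_iff_below_diff[OF W] a0(1) approximant_subset_image[OF X'] by blast
  then have "strict le x ?a" using approximant_below_image[OF X _ x] a0 by blast
  moreover have "x \<in> P" "?a \<in> P" "a \<in> P"
    using x a a0(1) XX' WO_subset_carrier[OF W(2)] by blast+
  ultimately show ?thesis
    using a0(2) poset_trans[of x ?a a] a x unfolding strict_def by blast
qed

lemma approximant_least_diff_below: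
  assumes X: "approximant X" and X': "approximant X'"
    and ne: "X - X' \<noteq> {}" "X' - X \<noteq> {}"
  shows "strict le (least le (X' - X)) (least le (X - X'))"
proof -
  have W: "X \<in> WO" "X' \<in> WO" using X X' approximant_WO by blast+
  let ?a = "least le (X - X')" and ?b = "least le (X' - X)"
  have a: "?a \<in> X - X'" using least_WO_mem[OF W(1), of "X - X'"] ne by blast
  have b: "?b \<in> X' - X" using least_WO_mem[OF W(2), of "X' - X"] ne by blast
  show ?thesis
  proof (cases "?a \<in> f X'")
    case True
    then show ?thesis using approximant_below_image[OF X', of ?a ?b] a b by blast
  next
    case False
    moreover have "?a \<in> f X" using a approximant_subset_image[OF X] by blast
    ultimately obtain x where x: "x \<in> (X - X') \<union> (X' - X)" "strict le x ?a"
      using contraction[OF W] by blast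
    then have "x \<in> X' - X" using not_strict_least_WO[OF W(1), of "X - X'" x] by blast
    then have "le ?b x" using least_WO_le[OF W(2), of "X' - X" x] by blast
    moreover have "x \<in> P" "?a \<in> P" "?b \<in> P" using x a b W WO_subset_carrier by blast+
    ultimately show ?thesis
      using x(2) poset_trans[of ?b x ?a] poset_antisym[of ?b x] unfolding strict_def by metis
  qed
qed

lemma approximant_chain:
  assumes X: "approximant X" and X': "approximant X'"
  shows "X \<subseteq> X' \<or> X' \<subseteq> X"
proof (rule ccontr)
  assume "\<not> ?thesis"
  then have ne: "X - X' \<noteq> {}" "X' - X \<noteq> {}" by blast+
  let ?a = "least le (X - X')" and ?b = "least le (X' - X)"
  have "?a \<in> X" "?b \<in> X'"
    using least_WO_mem[OF approximant_WO[OF X], of "X - X'"]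
      least_WO_mem[OF approximant_WO[OF X'], of "X' - X"] ne by blast+
  then have "?a \<in> P" "?b \<in> P" using X X' approximant_WO WO_subset_carrier by blast+
  moreover have "strict le ?b ?a" "strict le ?a ?b"
    using approximant_least_diff_below[OF X X' ne] approximant_least_diff_below[OF X' X ne(2,1)] .
  ultimately show False using poset_antisym[of ?a ?b] unfolding strict_def by blast
qed

lemma approximant_initial_in_image:
  assumes X: "approximant X" and Y: "Y \<in> WO" and XY: "X \<subseteq> Y"
    and above: "\<And>z x. z \<in> Y - X \<Longrightarrow> x \<in> X \<Longrightarrow> strict le x z"
  shows "initial_segment le X (f Y)"
proof -
  have W: "X \<in> WO" using approximant_WO[OF X] .
  have P: "Y \<subseteq> P" "f Y \<subseteq> P" using Y f_WO WO_subset_carrier by blast+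
  have agree: "y \<in> f X \<longleftrightarrow> y \<in> f Y" if "y \<in> P" "le y x" "x \<in> X" for x y
  proof (rule image_mem_iff_below_diff[OF W Y \<open>y \<in> P\<close>], intro ballI)
    fix d assume "d \<in> (X - Y) \<union> (Y - X)"
    then have "d \<in> Y - X" using XY by blast
    then show "le y d"
      using above[of d x] that P XY poset_trans[of y x d] unfolding strict_def by blast
  qed
  have "X \<subseteq> f Y"
    using agree[of x x for x] approximant_subset_image[OF X] XY P(1) poset_refl by blast
  moreover have "y \<in> X" if "y \<in> f Y" "x \<in> X" "le y x" for x y
    using agree[of y x] approximant_down_closed[OF X _ that(2,3)] that P(2) by blast
  ultimately show ?thesis unfolding initial_segment_def by blast
qed

lemma Union_approximants_above:
  assumes F: "\<forall>X\<in>F. approximant X" and "X \<in> F" and z: "z \<in> \<Union>F - X" and x: "x \<in> X"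
  shows "strict le x z"
proof -
  obtain X' where X': "X' \<in> F" "z \<in> X'" using z by blast
  then have "X \<subseteq> X'" using approximant_chain F \<open>X \<in> F\<close> z by blast
  then show ?thesis using approximant_below_extension F \<open>X \<in> F\<close> X' z x by blast
qed

lemma Union_approximants_WO:
  assumes F: "\<forall>X\<in>F. approximant X"
  shows "\<Union>F \<in> WO"
  unfolding WO_sets_def well_ordered_subset_def
proof (intro CollectI conjI allI impI)
  show "\<Union>F \<subseteq> P" using F approximant_WO WO_subset_carrier by blast
  fix S assume S: "S \<subseteq> \<Union>F \<and> S \<noteq> {}"
  then obtain X where X: "X \<in> F" "S \<inter> X \<noteq> {}" by blast
  have W: "X \<in> WO" using F X approximant_WO by blast
  let ?m = "least le (S \<inter> X)"
  have m: "?m \<in> S \<inter> X" using least_WO_mem[OF W, of "S \<inter> X"] X by blast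
  have "le ?m z" if z: "z \<in> S" for z
  proof (cases "z \<in> X")
    case True
    then show ?thesis using least_WO_le[OF W, of "S \<inter> X" z] z X by blast
  next
    case False
    then show ?thesis using Union_approximants_above[OF F X(1), of z ?m] z S m
      unfolding strict_def by blast
  qed
  then show "\<exists>m. is_least le S m" using m unfolding is_least_def by blast
qed

lemma approximant_Union:
  assumes F: "\<forall>X\<in>F. approximant X"
  shows "approximant (\<Union>F)"
proof -
  have W: "\<Union>F \<in> WO" using Union_approximants_WO[OF F] .
  have "initial_segment le X (f (\<Union>F))" if "X \<in> F" for X
    using approximant_initial_in_image[OF _ W] Union_approximants_above[OF F that] F that by blast
  then show ?thesis using W unfolding approximant_def initial_segment_def by blast
qed

lemma approximant_succ:
  assumes X: "approximant X" and new: "f X - X \<noteq> {}"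
  shows "approximant (X \<union> {least le (f X - X)})"
proof -
  let ?m = "least le (f X - X)" and ?X' = "X \<union> {least le (f X - X)}"
  have fX: "f X \<in> WO" using f_WO approximant_WO X by blast
  have m: "?m \<in> f X - X" "\<And>z. z \<in> f X - X \<Longrightarrow> le ?m z"
    using least_WO[OF fX, of "f X - X"] new by blast+
  have "?X' \<subseteq> f X" using approximant_subset_image[OF X] m(1) by blast
  then have W: "X \<in> WO" "?X' \<in> WO" using WO_subset[OF fX] approximant_WO[OF X] by blast+
  have P: "f X \<subseteq> P" "f ?X' \<subseteq> P" using WO_subset_carrier fX f_WO[OF W(2)] by blast+
  have below: "le x ?m" if "x \<in> ?X'" for x
    using that approximant_below_image[OF X m(1)] poset_refl m(1) P unfolding strict_def by blast
  have agree: "y \<in> f X \<longleftrightarrow> y \<in> f ?X'" if "y \<in> P" "le y ?m" for y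
    using image_mem_iff_below_diff[OF W that(1)] that(2) by blast
  have "?X' \<subseteq> f ?X'"
    using agree below approximant_subset_image[OF X] m(1) P(1) by blast
  moreover have "y \<in> ?X'" if y: "y \<in> f ?X'" "x \<in> ?X'" "le y x" for x y
  proof (rule ccontr)
    assume "y \<notin> ?X'"
    have "le y ?m" using poset_trans[of y x ?m] below[OF y(2)] y P \<open>?X' \<subseteq> f ?X'\<close> m(1) by blast
    then have "y \<in> f X" using agree y(1) P(2) by blast
    then have "le ?m y" using m(2) \<open>y \<notin> ?X'\<close> by blast
    then show False
      using \<open>le y ?m\<close> \<open>y \<notin> ?X'\<close> \<open>y \<in> f X\<close> m(1) P poset_antisym[of y ?m] by blast
  qed
  ultimately show ?thesis using W(2) unfolding approximant_def initial_segment_def by blast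
qed

lemma Inter_approximants_mem:
  assumes A: "\<forall>X\<in>A. approximant X" and "A \<noteq> {}"
  shows "\<Inter>A \<in> A"
proof -
  obtain X0 where X0: "X0 \<in> A" using \<open>A \<noteq> {}\<close> by blast
  show ?thesis
  proof (cases "X0 - \<Inter>A = {}")
    case True
    then have "\<Inter>A = X0" using X0 by blast
    then show ?thesis using X0 by simp
  next
    case False
    have W: "X0 \<in> WO" using A X0 approximant_WO by blast
    let ?t = "least le (X0 - \<Inter>A)"
    have t: "?t \<in> X0 - \<Inter>A" "\<And>z. z \<in> X0 - \<Inter>A \<Longrightarrow> le ?t z"
      using least_WO[OF W, of "X0 - \<Inter>A"] False by blast+
    then obtain X1 where X1: "X1 \<in> A" "?t \<in> X0 - X1" by blast
    have "X1 \<subseteq> X0" using approximant_chain A X0 X1 by blast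
    have "X1 \<subseteq> X" if X: "X \<in> A" for X
    proof (rule ccontr)
      assume "\<not> X1 \<subseteq> X"
      then obtain e where e: "e \<in> X1" "e \<notin> X" by blast
      then have "le ?t e" using t(2) X \<open>X1 \<subseteq> X0\<close> by blast
      moreover have "strict le e ?t"
        using approximant_below_extension A X0 X1 \<open>X1 \<subseteq> X0\<close> e(1) by blast
      moreover have "e \<in> P" "?t \<in> P" using e t(1) \<open>X1 \<subseteq> X0\<close> WO_subset_carrier[OF W] by blast+
      ultimately show False using poset_antisym[of e ?t] unfolding strict_def by blast
    qed
    then have "\<Inter>A = X1" using X1 by blast
    then show ?thesis using X1 by simp
  qed
qed

definition fixpoint :: "'a set" where
  "fixpoint = \<Union>{X. approximant X}"

lemma approximant_fixpoint: "approximant fixpoint"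
  unfolding fixpoint_def by (rule approximant_Union) blast

lemma approximant_subset_fixpoint: "approximant X \<Longrightarrow> X \<subseteq> fixpoint"
  unfolding fixpoint_def by blast

lemma fixpoint_fixed: "f fixpoint = fixpoint"
proof -
  have "f fixpoint - fixpoint = {}"
  proof (rule ccontr)
    assume new: "f fixpoint - fixpoint \<noteq> {}"
    have "least le (f fixpoint - fixpoint) \<in> f fixpoint - fixpoint"
      using least_WO_mem[OF f_WO[OF approximant_WO[OF approximant_fixpoint]]] new by blast
    moreover have "least le (f fixpoint - fixpoint) \<in> fixpoint"
      using approximant_subset_fixpoint[OF approximant_succ[OF approximant_fixpoint new]] by blast
    ultimately show False by blast
  qed
  then show ?thesis using approximant_subset_image[OF approximant_fixpoint] by blast
qed

lemma fixed_point_eq_fixpoint: "Z \<in> WO \<Longrightarrow> f Z = Z \<Longrightarrow> Z = fixpoint"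
  using fixed_point_unique approximant_WO[OF approximant_fixpoint] fixpoint_fixed by blast

definition approximant_order :: "'a set rel" where
  "approximant_order = {(X, Y). approximant X \<and> approximant Y \<and> X \<subseteq> Y}"

lemma Field_approximant_order: "Field approximant_order = {X. approximant X}"
  unfolding approximant_order_def Field_def by auto

lemma under_approximant_order:
  "approximant Y \<Longrightarrow> X \<in> under approximant_order Y \<longleftrightarrow> approximant X \<and> X \<subseteq> Y"
  unfolding under_def approximant_order_def by simp

lemma underS_approximant_order:
  "approximant Y \<Longrightarrow> X \<in> underS approximant_order Y \<longleftrightarrow> approximant X \<and> X \<subset> Y"
  unfolding underS_def approximant_order_def by auto

lemma Well_order_approximant_order: "Well_order approximant_order"
proof -
  have linear: "Linear_order approximant_order"
    unfolding Field_approximant_order linear_order_on_def partial_order_on_def preorder_on_def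
  proof (intro conjI)
    show "approximant_order \<subseteq> {X. approximant X} \<times> {X. approximant X}"
      "refl_on {X. approximant X} approximant_order"
      unfolding refl_on_def approximant_order_def by blast+
    show "trans approximant_order" "antisym approximant_order"
      unfolding trans_def antisym_def approximant_order_def by blast+
    show "total_on {X. approximant X} approximant_order"
      unfolding total_on_def approximant_order_def using approximant_chain by blast
  qed
  have "\<exists>X\<in>A. \<forall>Y\<in>A. (X, Y) \<in> approximant_order"
    if "A \<subseteq> Field approximant_order" "A \<noteq> {}" for A
  proof -
    have A: "\<forall>X\<in>A. approximant X" using that(1) Field_approximant_order by blast
    then have "\<Inter>A \<in> A" using Inter_approximants_mem that(2) by blast
    then show ?thesis using A unfolding approximant_order_def by blast
  qed
  then show ?thesis using Linear_order_Well_order_iff[OF linear] by blast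
qed

lemma approximant_order_bottom:
  assumes "approximant X" "underS approximant_order X = {}"
  shows "X = {}"
  using assms underS_approximant_order[of X "{}"] approximant_empty by blast

lemma approximant_order_successor:
  assumes X: "approximant X" and Y: "approximant Y"
    and succ: "underS approximant_order X = under approximant_order Y"
  shows "f Y - Y \<noteq> {}" and "X = Y \<union> {least le (f Y - Y)}"
proof -
  have "Y \<in> under approximant_order Y" using under_approximant_order[OF Y] Y by blast
  then have YX: "Y \<subset> X" using succ underS_approximant_order[OF X] by blast
  show new: "f Y - Y \<noteq> {}"
  proof
    assume "f Y - Y = {}"
    then have "f Y = Y" using approximant_subset_image[OF Y] by blast
    then have "Y = fixpoint" using fixed_point_eq_fixpoint approximant_WO[OF Y] by blast
    then show False using YX approximant_subset_fixpoint[OF X] by blast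
  qed
  let ?Y' = "Y \<union> {least le (f Y - Y)}"
  have Y': "approximant ?Y'" using approximant_succ[OF Y new] .
  have "\<not> ?Y' \<subset> X"
  proof
    assume "?Y' \<subset> X"
    then have "?Y' \<in> under approximant_order Y"
      using succ underS_approximant_order[OF X] Y' by blast
    then have "?Y' \<subseteq> Y" using under_approximant_order[OF Y] by blast
    then show False
      using least_WO_mem[OF f_WO[OF approximant_WO[OF Y]], of "f Y - Y"] new by blast
  qed
  then show "X = ?Y'" using approximant_chain[OF X Y'] YX by blast
qed

lemma approximant_order_limit:
  assumes X: "approximant X"
    and limit: "\<forall>Y\<in>Field approximant_order. underS approximant_order X \<noteq> under approximant_order Y"
  shows "X = \<Union>(underS approximant_order X)"
proof (rule ccontr)
  let ?U = "\<Union>(underS approximant_order X)"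
  have U: "approximant ?U" using approximant_Union underS_approximant_order[OF X] by blast
  assume "X \<noteq> ?U"
  moreover have "?U \<subseteq> X" using underS_approximant_order[OF X] by blast
  ultimately have "Z \<in> underS approximant_order X \<longleftrightarrow> Z \<in> under approximant_order ?U" for Z
    using underS_approximant_order[OF X, of Z] under_approximant_order[OF U, of Z] by blast
  then have "underS approximant_order X = under approximant_order ?U" by blast
  then show False using limit U Field_approximant_order by blast
qed

lemma is_iteration_approximants: "is_iteration le f approximant_order id"
  unfolding is_iteration_def
proof (intro conjI ballI impI)
  show "Well_order approximant_order" by (rule Well_order_approximant_order)
next
  fix X assume "X \<in> Field approximant_order" "underS approximant_order X = {}"
  then show "id X = {}" using approximant_order_bottom Field_approximant_order by simp
next
  fix X Y assume "X \<in> Field approximant_order" "Y \<in> Field approximant_order"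
    and "underS approximant_order X = under approximant_order Y"
  then show "id X = (if f (id Y) - id Y = {} then id Y else id Y \<union> {least le (f (id Y) - id Y)})"
    using approximant_order_successor Field_approximant_order by simp
next
  fix X assume "X \<in> Field approximant_order"
    and "underS approximant_order X \<noteq> {} \<and>
      (\<forall>Y\<in>Field approximant_order. underS approximant_order X \<noteq> under approximant_order Y)"
  then show "id X = (\<Union>Y\<in>underS approximant_order X. id Y)"
    using approximant_order_limit Field_approximant_order by simp
qed

end

theorem theorem6p2:
  fixes P :: "'a set" and le :: "'a \<Rightarrow> 'a \<Rightarrow> bool" and f :: "'a set \<Rightarrow> 'a set"
  assumes poset: "partial_order_on_set P le"
    and f_maps: "\<forall>X\<in>WO_sets P le. f X \<in> WO_sets P le"
    and f_cond: "\<forall>X\<in>WO_sets P le. \<forall>X'\<in>WO_sets P le. \<forall>y\<in>symdiff (f X) (f X').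
                   \<exists>x\<in>symdiff X X'. strict le x y"
  shows "\<exists>Y. Y \<in> WO_sets P le \<and> f Y = Y \<and>
           (\<forall>Z\<in>WO_sets P le. f Z = Z \<longrightarrow> Z = Y) \<and>
           (\<exists>(r :: 'a set rel) X. is_iteration le f r X \<and> (\<exists>\<alpha>\<in>Field r. X \<alpha> = Y))"
proof -
  interpret wo_contraction P le f using assms by unfold_locales
  show ?thesis
  proof (intro exI conjI ballI impI)
    show "fixpoint \<in> WO_sets P le" using approximant_WO[OF approximant_fixpoint] .
    show "f fixpoint = fixpoint" by (rule fixpoint_fixed)
    show "Z = fixpoint" if "Z \<in> WO_sets P le" "f Z = Z" for Z
      using fixed_point_eq_fixpoint that .
    show "is_iteration le f approximant_order id" by (rule is_iteration_approximants)
    show "\<exists>X\<in>Field approximant_order. id X = fixpoint"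
      using approximant_fixpoint Field_approximant_order by auto
  qed
qed

end
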